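(* For every $a>0$, one has the identity in law $$\mathbf{B}'_{a,1/2}+\mathbf{B}'_{a,1/2}\;\stackrel{d}{=}\;\mathbf{B}'_{2a,1/2}\times\left(1+\sqrt{\mathbf{B}_{a,1/2}}\right),$$ where all random variables appearing on the same side of the identity are independent.
   Context: For $p,q>0$, $\mathbf{B}_{p,q}$ denotes a beta random variable with density $\frac{\Gamma(p+q)}{\Gamma(p)\Gamma(q)}x^{p-1}(1-x)^{q-1}$ on $(0,1)$, and $\mathbf{B}'_{p,q}$ denotes a beta prime random variable with density $\frac{\Gamma(p+q)}{\Gamma(p)\Gamma(q)}\frac{x^{p-1}}{(1+x)^{p+q}}$ on $(0,\infty)$. $X\stackrel{d}{=}Y$ means $X$ and $Y$ have the same distribution. *)

theory Defs
  imports "HOL-Probability.Probability"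
begin

definition beta_density :: "real \<Rightarrow> real \<Rightarrow> real \<Rightarrow> real" where
  "beta_density p q x =
     (if 0 < x \<and> x < 1
      then Gamma (p + q) / (Gamma p * Gamma q) * x powr (p - 1) * (1 - x) powr (q - 1)
      else 0)"

definition beta_prime_density :: "real \<Rightarrow> real \<Rightarrow> real \<Rightarrow> real" where
  "beta_prime_density p q x =
     (if 0 < x
      then Gamma (p + q) / (Gamma p * Gamma q) * x powr (p - 1) / (1 + x) powr (p + q)
      else 0)"

definition beta_measure :: "real \<Rightarrow> real \<Rightarrow> real measure" where
  "beta_measure p q = density lborel (\<lambda>x. ennreal (beta_density p q x))"

definition beta_prime_measure :: "real \<Rightarrow> real \<Rightarrow> real measure" where
  "beta_prime_measure p q = density lborel (\<lambda>x. ennreal (beta_prime_density p q x))"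

end

(* B'_{p,1/2} is the law of G_p / G_{1/2} for independent gamma variables, i.e. a mixture of one-sided
   1/2-stable (Levy) laws: given G_p = g the ratio has density levy_density (sqrt g). Levy scale
   parameters add under convolution, so B'_{a,1/2} + B'_{a,1/2} is the Levy mixture with scale
   sqrt G_a + sqrt G'_a. By the beta-gamma algebra this scale is sqrt G_{2a} (sqrt T + sqrt (1 - T))
   with T of law B_{a,a} independent of G_{2a}, and (sqrt T + sqrt (1 - T))^2 = 1 + sqrt (4 T (1 - T)),
   where 4 T (1 - T) has law B_{a,1/2} by the duplication formula. So the sum is the Levy mixture with
   scale sqrt (G_{2a} (1 + sqrt B_{a,1/2})), which is B'_{2a,1/2} (1 + sqrt B_{a,1/2}). *)

theory Submission
  imports Defs
begin

lemma nn_integral_indicator_UN_incseq: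
  fixes f :: "'a \<Rightarrow> ennreal"
  assumes [measurable]: "f \<in> borel_measurable M" "\<And>i. A i \<in> sets M" and "incseq A"
  shows "(\<integral>\<^sup>+x. f x * indicator (\<Union>i. A i) x \<partial>M) = (SUP i. \<integral>\<^sup>+x. f x * indicator (A i) x \<partial>M)"
proof -
  have "(\<integral>\<^sup>+x. f x * indicator (\<Union>i. A i) x \<partial>M) = emeasure (density M f) (\<Union>i. A i)"
    by (simp add: emeasure_density)
  also have "\<dots> = (SUP i. emeasure (density M f) (A i))"
    using assms by (intro SUP_emeasure_incseq[symmetric]) auto
  finally show ?thesis
    by (simp add: emeasure_density)
qed

lemma image_Icc_of_mono_on:
  fixes g :: "real \<Rightarrow> real"
  assumes "l \<le> u" "continuous_on {l..u} g" "mono_on {l..u} g"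
  shows "g ` {l..u} = {g l..g u}"
proof
  show "g ` {l..u} \<subseteq> {g l..g u}"
    using assms(1,3) by (auto simp: mono_on_def)
  show "{g l..g u} \<subseteq> g ` {l..u}"
    using IVT'[of g l _ u] assms(1,2) by (force simp: image_iff)
qed

lemma mono_on_einterval_of_deriv_nonneg:
  fixes g g' :: "real \<Rightarrow> real"
  assumes deriv: "\<And>x. x \<in> einterval a b \<Longrightarrow> (g has_real_derivative g' x) (at x)"
    and nonneg: "\<And>x. x \<in> einterval a b \<Longrightarrow> 0 \<le> g' x"
  shows "mono_on (einterval a b) g"
proof (rule mono_onI)
  fix x y
  assume "x \<in> einterval a b" "y \<in> einterval a b" "x \<le> y"
  moreover from this have "{x..y} \<subseteq> einterval a b"
    unfolding einterval_def by (auto intro: less_le_trans[of a "ereal x"] le_less_trans[of _ "ereal y" b])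
  ultimately show "g x \<le> g y"
    using deriv_nonneg_imp_mono[of x y g g'] deriv nonneg by blast
qed

lemma borel_measurable_substitution_integrand:
  fixes f :: "real \<Rightarrow> ennreal" and g g' :: "real \<Rightarrow> real"
  assumes [measurable]: "f \<in> borel_measurable borel" "S \<in> sets borel"
    and "continuous_on S g" "continuous_on S g'"
  shows "(\<lambda>x. f (g x) * ennreal (g' x) * indicator S x) \<in> borel_measurable borel"
proof -
  have [measurable]: "(\<lambda>x. if x \<in> S then g x else 0) \<in> borel_measurable borel"
      "(\<lambda>x. if x \<in> S then g' x else 0) \<in> borel_measurable borel"
    using assms by (auto intro!: borel_measurable_continuous_on_if)
  have "(\<lambda>x. f (g x) * ennreal (g' x) * indicator S x)
      = (\<lambda>x. f (if x \<in> S then g x else 0) * ennreal (if x \<in> S then g' x else 0) * indicator S x)"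
    by (auto simp: fun_eq_iff split: split_indicator)
  then show ?thesis
    by simp
qed

text \<open>The library version nn_integral_substitution_aux covers compact intervals; exhausting the open
  interval by compact ones and using monotone convergence on both sides extends it.\<close>
lemma nn_integral_substitution_einterval:
  fixes f :: "real \<Rightarrow> ennreal" and g g' :: "real \<Rightarrow> real" and a b :: ereal
  assumes "a < b" and f[measurable]: "f \<in> borel_measurable borel"
    and deriv: "\<And>x. x \<in> einterval a b \<Longrightarrow> (g has_real_derivative g' x) (at x)"
    and cont: "continuous_on (einterval a b) g'"
    and nonneg: "\<And>x. x \<in> einterval a b \<Longrightarrow> 0 \<le> g' x"
  shows "(\<integral>\<^sup>+x. f x * indicator (g ` einterval a b) x \<partial>lborel)
       = (\<integral>\<^sup>+x. f (g x) * ennreal (g' x) * indicator (einterval a b) x \<partial>lborel)"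
proof -
  define S where "S = einterval a b"
  obtain l u :: "nat \<Rightarrow> real" where S: "S = (\<Union>i. {l i .. u i})"
    and "incseq u" "decseq l" and lu: "\<And>i. l i < u i"
    using einterval_Icc_approximation[OF \<open>a < b\<close>] unfolding S_def by metis
  have inc: "incseq (\<lambda>i. {l i..u i})"
    using \<open>incseq u\<close> \<open>decseq l\<close> by (auto simp: incseq_def decseq_def)
  have sub: "{l i..u i} \<subseteq> S" for i
    using S by auto
  have contg: "continuous_on S g"
    using deriv unfolding S_def by (meson DERIV_isCont continuous_at_imp_continuous_on)
  have img: "g ` {l i..u i} = {g (l i)..g (u i)}" for i
    using lu[of i] sub[of i] contg mono_on_einterval_of_deriv_nonneg[OF deriv nonneg]
    unfolding S_def by (intro image_Icc_of_mono_on) (auto intro: continuous_on_subset mono_on_subset)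
  have "incseq (\<lambda>i. g ` {l i..u i})"
    using inc unfolding incseq_def by (blast intro: image_mono)
  then have inc': "incseq (\<lambda>i. {g (l i)..g (u i)})"
    by (simp only: img)
  define h where "h x = f (g x) * ennreal (g' x) * indicator S x" for x
  have [measurable]: "h \<in> borel_measurable borel"
    unfolding h_def using contg cont[folded S_def]
    by (intro borel_measurable_substitution_integrand) (simp_all add: S_def)
  have piece: "(\<integral>\<^sup>+x. f x * indicator {g (l i)..g (u i)} x \<partial>lborel)
      = (\<integral>\<^sup>+x. h x * indicator {l i..u i} x \<partial>lborel)" for i
  proof -
    have "(\<integral>\<^sup>+x. f x * indicator {g (l i)..g (u i)} x \<partial>lborel)
       = (\<integral>\<^sup>+x. f (g x) * ennreal (g' x) * indicator {l i..u i} x \<partial>lborel)"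
      using sub[of i] lu[of i] deriv nonneg continuous_on_subset[OF cont[folded S_def] sub[of i]]
      unfolding S_def by (intro nn_integral_substitution_aux[OF f]) auto
    also have "\<dots> = (\<integral>\<^sup>+x. h x * indicator {l i..u i} x \<partial>lborel)"
      using sub[of i] by (intro nn_integral_cong) (auto simp: h_def split: split_indicator)
    finally show ?thesis .
  qed
  have "g ` S = (\<Union>i. {g (l i)..g (u i)})"
    unfolding S image_UN img ..
  then have "(\<integral>\<^sup>+x. f x * indicator (g ` S) x \<partial>lborel)
      = (SUP i. \<integral>\<^sup>+x. f x * indicator {g (l i)..g (u i)} x \<partial>lborel)"
    using inc' by (simp add: nn_integral_indicator_UN_incseq)
  also have "\<dots> = (\<integral>\<^sup>+x. h x * indicator S x \<partial>lborel)"
    unfolding piece S using inc by (simp add: nn_integral_indicator_UN_incseq)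
  also have "\<dots> = (\<integral>\<^sup>+x. f (g x) * ennreal (g' x) * indicator S x \<partial>lborel)"
    by (intro nn_integral_cong) (auto simp: h_def split: split_indicator)
  finally show ?thesis
    unfolding S_def .
qed

lemma nn_integral_substitution_einterval_antimono:
  fixes f :: "real \<Rightarrow> ennreal" and g g' :: "real \<Rightarrow> real" and a b :: ereal
  assumes "a < b" and [measurable]: "f \<in> borel_measurable borel"
    and deriv: "\<And>x. x \<in> einterval a b \<Longrightarrow> (g has_real_derivative g' x) (at x)"
    and cont: "continuous_on (einterval a b) g'"
    and nonpos: "\<And>x. x \<in> einterval a b \<Longrightarrow> g' x \<le> 0"
    and [measurable]: "g ` einterval a b \<in> sets borel"
  shows "(\<integral>\<^sup>+x. f x * indicator (g ` einterval a b) x \<partial>lborel)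
       = (\<integral>\<^sup>+x. f (g x) * ennreal (- g' x) * indicator (einterval a b) x \<partial>lborel)"
proof -
  have "(\<integral>\<^sup>+x. f x * indicator (g ` einterval a b) x \<partial>lborel)
      = ennreal \<bar>-1\<bar> * (\<integral>\<^sup>+x. f (0 + (-1) * x) * indicator (g ` einterval a b) (0 + (-1) * x) \<partial>lborel)"
    by (rule nn_integral_real_affine) auto
  also have "\<dots> = (\<integral>\<^sup>+x. f (- x) * indicator ((\<lambda>x. - g x) ` einterval a b) x \<partial>lborel)"
    by (simp, intro nn_integral_cong) (auto simp: indicator_def image_iff)
  also have "\<dots> = (\<integral>\<^sup>+x. f (- (- g x)) * ennreal (- g' x) * indicator (einterval a b) x \<partial>lborel)"
    using \<open>a < b\<close>
    by (intro nn_integral_substitution_einterval) (auto intro!: derivative_eq_intros deriv continuous_intros cont nonpos)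
  finally show ?thesis
    by simp
qed

lemma nn_integral_lborel_shift:
  fixes f :: "real \<Rightarrow> ennreal"
  assumes [measurable]: "f \<in> borel_measurable borel"
  shows "(\<integral>\<^sup>+y. f y \<partial>lborel) = (\<integral>\<^sup>+s. f (s - x) \<partial>lborel)"
  using nn_integral_real_affine[OF assms, of 1 "- x"] by simp

lemma nn_integral_split_symmetric:
  fixes F :: "real \<Rightarrow> ennreal"
  assumes [measurable]: "F \<in> borel_measurable borel" and symm: "\<And>t. F (2 * c - t) = F t"
  shows "(\<integral>\<^sup>+t. F t \<partial>lborel) = 2 * (\<integral>\<^sup>+t. F t * indicator {..<c} t \<partial>lborel)"
proof -
  have "(\<integral>\<^sup>+t. F t \<partial>lborel) = (\<integral>\<^sup>+t. F t * indicator {..<c} t + F t * indicator {c..} t \<partial>lborel)"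
    by (intro nn_integral_cong) (auto simp: indicator_def)
  also have "\<dots> = (\<integral>\<^sup>+t. F t * indicator {..<c} t \<partial>lborel) + (\<integral>\<^sup>+t. F t * indicator {c..} t \<partial>lborel)"
    by (rule nn_integral_add) measurable
  also have "(\<integral>\<^sup>+t. F t * indicator {c..} t \<partial>lborel) = (\<integral>\<^sup>+t. F t * indicator {..c} t \<partial>lborel)"
    using nn_integral_real_affine[of "\<lambda>t. F t * indicator {c..} t" "-1" "2 * c"]
    by (simp add: symm indicator_def)
  also have "\<dots> = (\<integral>\<^sup>+t. F t * indicator {..<c} t \<partial>lborel)"
    using AE_lborel_singleton[of c]
    by (intro nn_integral_cong_AE) (auto elim!: eventually_mono simp: indicator_def)
  finally show ?thesis
    by (simp add: mult_2)
qed

lemma nn_integral_mult_nn_integral_swap: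
  fixes f g :: "real \<Rightarrow> ennreal" and F :: "real \<Rightarrow> real \<Rightarrow> ennreal"
  assumes [measurable]: "f \<in> borel_measurable borel" "g \<in> borel_measurable borel"
    "(\<lambda>(x, y). F x y) \<in> borel_measurable (borel \<Otimes>\<^sub>M borel)"
  shows "(\<integral>\<^sup>+x. f x * (\<integral>\<^sup>+y. g y * F x y \<partial>lborel) \<partial>lborel)
       = (\<integral>\<^sup>+y. g y * (\<integral>\<^sup>+x. f x * F x y \<partial>lborel) \<partial>lborel)"
proof -
  have [measurable]: "(\<lambda>(x, y). f x * (g y * F x y)) \<in> borel_measurable (borel \<Otimes>\<^sub>M borel)"
    by measurable
  have "(\<integral>\<^sup>+x. f x * (\<integral>\<^sup>+y. g y * F x y \<partial>lborel) \<partial>lborel)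
      = (\<integral>\<^sup>+x. \<integral>\<^sup>+y. f x * (g y * F x y) \<partial>lborel \<partial>lborel)"
    by (intro nn_integral_cong nn_integral_cmult[symmetric]) measurable
  also have "\<dots> = (\<integral>\<^sup>+y. \<integral>\<^sup>+x. f x * (g y * F x y) \<partial>lborel \<partial>lborel)"
    by (rule lborel_pair.Fubini') measurable
  also have "\<dots> = (\<integral>\<^sup>+y. g y * (\<integral>\<^sup>+x. f x * F x y \<partial>lborel) \<partial>lborel)"
    by (intro nn_integral_cong) (simp add: nn_integral_cmult[symmetric] mult_ac)
  finally show ?thesis .
qed

lemma emeasure_distr_pair_density:
  fixes D1 D2 :: "real \<Rightarrow> real"
  assumes [measurable]: "D1 \<in> borel_measurable borel" "D2 \<in> borel_measurable borel"
    "h \<in> borel_measurable (borel \<Otimes>\<^sub>M borel)" "A \<in> sets borel"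
  shows "emeasure (distr (density lborel (\<lambda>x. ennreal (D1 x)) \<Otimes>\<^sub>M density lborel (\<lambda>x. ennreal (D2 x))) borel h) A
       = (\<integral>\<^sup>+x. ennreal (D1 x) * (\<integral>\<^sup>+y. ennreal (D2 y) * indicator A (h (x, y)) \<partial>lborel) \<partial>lborel)"
proof -
  let ?M1 = "density lborel (\<lambda>x. ennreal (D1 x))" and ?M2 = "density lborel (\<lambda>x. ennreal (D2 x))"
  interpret sigma_finite_measure ?M2
    using sigma_finite_measure.sigma_finite_iff_density_finite[OF sigma_finite_lborel, of "\<lambda>x. ennreal (D2 x)"]
    by auto
  have [measurable]: "h \<in> measurable (?M1 \<Otimes>\<^sub>M ?M2) borel"
    by measurable
  have "emeasure (distr (?M1 \<Otimes>\<^sub>M ?M2) borel h) A = (\<integral>\<^sup>+z. indicator A z \<partial>distr (?M1 \<Otimes>\<^sub>M ?M2) borel h)"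
    by (rule nn_integral_indicator[symmetric]) simp
  also have "\<dots> = (\<integral>\<^sup>+w. indicator A (h w) \<partial>(?M1 \<Otimes>\<^sub>M ?M2))"
    by (rule nn_integral_distr) simp_all
  also have "\<dots> = (\<integral>\<^sup>+x. \<integral>\<^sup>+y. indicator A (h (x, y)) \<partial>?M2 \<partial>?M1)"
    by (rule nn_integral_fst[symmetric]) measurable
  also have "\<dots> = (\<integral>\<^sup>+x. ennreal (D1 x) * (\<integral>\<^sup>+y. ennreal (D2 y) * indicator A (h (x, y)) \<partial>lborel) \<partial>lborel)"
    by (simp add: nn_integral_density)
  finally show ?thesis .
qed

lemma nn_integral_gamma_kernel:
  assumes s: "s > 0" and k: "k > 0"
  shows "(\<integral>\<^sup>+t. ennreal (indicator {0<..} t * t powr (s - 1) * exp (- (k * t))) \<partial>lborel)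
        = ennreal (Gamma s / k powr s)"
proof -
  have "(\<integral>\<^sup>+t. ennreal (indicator {0<..} t * t powr (s - 1) * exp (- (k * t))) \<partial>lborel)
    = ennreal \<bar>1/k\<bar> * (\<integral>\<^sup>+t. ennreal (indicator {0<..} (0 + 1/k * t) * (0 + 1/k * t) powr (s - 1) * exp (- (k * (0 + 1/k * t)))) \<partial>lborel)"
    by (rule nn_integral_real_affine) (use k in auto)
  also have "\<dots> = ennreal (1/k) * (\<integral>\<^sup>+t. ennreal (k powr (1 - s)) * ennreal (indicator {0..} t * t powr (s - 1) / exp t) \<partial>lborel)"
    using k by (intro arg_cong2[where f="(*)"] nn_integral_cong)
      (auto simp: indicator_def powr_divide powr_minus_divide ennreal_mult'[symmetric] exp_minus
        field_simps powr_diff)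
  also have "\<dots> = ennreal (1/k) * (ennreal (k powr (1 - s)) * ennreal (Gamma s))"
    by (subst nn_integral_cmult) (auto simp: Gamma_conv_nn_integral_real[OF s])
  also have "\<dots> = ennreal (Gamma s / k powr s)"
    using k s by (simp add: ennreal_mult'[symmetric] Gamma_real_pos less_imp_le powr_diff field_simps)
  finally show ?thesis .
qed

lemma nn_integral_gaussian_kernel:
  assumes s: "s > 0"
  shows "(\<integral>\<^sup>+w. ennreal (exp (- w\<^sup>2 / s)) \<partial>lborel) = ennreal (sqrt (pi * s))"
proof -
  define \<sigma> where "\<sigma> = sqrt (s / 2)"
  have \<sigma>: "\<sigma> > 0" "2 * \<sigma>\<^sup>2 = s"
    unfolding \<sigma>_def using s by simp_all
  interpret prob_space "density lborel (normal_density 0 \<sigma>)"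
    by (rule prob_space_normal_density[OF \<sigma>(1)])
  have normal: "exp (- w\<^sup>2 / s) = sqrt (pi * s) * normal_density 0 \<sigma> w" for w
  proof -
    have e: "sqrt (2 * pi * \<sigma>\<^sup>2) = sqrt (pi * s)"
      using \<sigma>(2) by (metis mult.assoc mult.commute)
    show ?thesis
      unfolding normal_density_def e \<sigma>(2) using s by simp
  qed
  have "(\<integral>\<^sup>+w. ennreal (exp (- w\<^sup>2 / s)) \<partial>lborel)
      = (\<integral>\<^sup>+w. ennreal (sqrt (pi * s)) * ennreal (normal_density 0 \<sigma> w) \<partial>lborel)"
    unfolding normal using s by (intro nn_integral_cong) (simp add: ennreal_mult normal_density_nonneg)
  also have "\<dots> = ennreal (sqrt (pi * s))"
    using emeasure_space_1 by (subst nn_integral_cmult) (auto simp: emeasure_density)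
  finally show ?thesis .
qed

lemma Gamma_legendre_duplication_real:
  fixes a :: real
  assumes a: "a > 0"
  shows "Gamma a * Gamma (a + 1/2) = 2 powr (1 - 2 * a) * sqrt pi * Gamma (2 * a)"
proof -
  have "complex_of_real a \<notin> \<int>\<^sub>\<le>\<^sub>0" "complex_of_real (a + 1/2) \<notin> \<int>\<^sub>\<le>\<^sub>0"
    using a by (auto simp only: of_real_in_nonpos_Ints_iff dest: nonpos_Ints_nonpos)
  then have "Gamma (complex_of_real a) * Gamma (complex_of_real a + 1/2) =
      exp ((1 - 2 * complex_of_real a) * of_real (ln 2)) * of_real (sqrt pi) * Gamma (2 * complex_of_real a)"
    by (intro Gamma_legendre_duplication) simp_all
  moreover have "exp ((1 - 2 * complex_of_real a) * of_real (ln 2)) = of_real (2 powr (1 - 2 * a))"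
    by (simp add: powr_def exp_of_real[symmetric])
  ultimately have "complex_of_real (Gamma a * Gamma (a + 1/2)) = complex_of_real (2 powr (1 - 2 * a) * sqrt pi * Gamma (2 * a))"
    using Gamma_complex_of_real[of a] Gamma_complex_of_real[of "a + 1/2"] Gamma_complex_of_real[of "2 * a"]
    by simp
  then show ?thesis
    by (simp only: of_real_eq_iff)
qed

definition gamma_density :: "real \<Rightarrow> real \<Rightarrow> real" where
  "gamma_density p x = (if 0 < x then x powr (p - 1) * exp (- x) / Gamma p else 0)"

text \<open>The law of c^2 / G_{1/2}: the one-sided stable law of index 1/2 and scale c.\<close>
definition levy_density :: "real \<Rightarrow> real \<Rightarrow> real" where
  "levy_density c x = (if 0 < x then c / (sqrt pi * x * sqrt x) * exp (- c\<^sup>2 / x) else 0)"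

lemma borel_measurable_gamma_density[measurable]:
  assumes [measurable]: "h \<in> borel_measurable M"
  shows "(\<lambda>x. gamma_density p (h x)) \<in> borel_measurable M"
  unfolding gamma_density_def by measurable

lemma borel_measurable_levy_density[measurable]:
  assumes [measurable]: "f \<in> borel_measurable M" "h \<in> borel_measurable M"
  shows "(\<lambda>x. levy_density (f x) (h x)) \<in> borel_measurable M"
  unfolding levy_density_def by measurable

lemma borel_measurable_beta_density[measurable]:
  assumes [measurable]: "h \<in> borel_measurable M"
  shows "(\<lambda>x. beta_density p q (h x)) \<in> borel_measurable M"
  unfolding beta_density_def by measurable

lemma borel_measurable_beta_prime_density[measurable]:
  assumes [measurable]: "h \<in> borel_measurable M"
  shows "(\<lambda>x. beta_prime_density p q (h x)) \<in> borel_measurable M"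
  unfolding beta_prime_density_def by measurable

lemma gamma_density_nonneg: "0 < p \<Longrightarrow> 0 \<le> gamma_density p x"
  unfolding gamma_density_def by (auto intro!: divide_nonneg_pos Gamma_real_pos)

lemma gamma_density_nonpos [simp]: "x \<le> 0 \<Longrightarrow> gamma_density p x = 0"
  unfolding gamma_density_def by simp

lemma levy_density_nonneg: "0 \<le> c \<Longrightarrow> 0 \<le> levy_density c x"
  unfolding levy_density_def by auto

lemma beta_density_nonneg: "0 < p \<Longrightarrow> 0 < q \<Longrightarrow> 0 \<le> beta_density p q x"
  unfolding beta_density_def by (auto intro!: mult_nonneg_nonneg divide_nonneg_nonneg less_imp_le)

lemma nn_integral_gamma_density_cong:
  assumes "\<And>g. 0 < g \<Longrightarrow> F g = G g"
  shows "(\<integral>\<^sup>+g. ennreal (gamma_density p g) * F g \<partial>lborel) = (\<integral>\<^sup>+g. ennreal (gamma_density p g) * G g \<partial>lborel)"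
  using assms by (intro nn_integral_cong) (metis gamma_density_nonpos not_less ennreal_0 mult_zero_left)

lemma gamma_density_mult_levy_density_sqrt:
  assumes x: "x > 0"
  shows "gamma_density p g * levy_density (sqrt g) x
       = 1 / (Gamma p * sqrt pi * x * sqrt x) * (indicator {0<..} g * g powr (p + 1/2 - 1) * exp (- ((1 + 1/x) * g)))"
proof (cases "g > 0")
  case g: True
  have "sqrt g * g powr (p - 1) = g powr (p + 1/2 - 1)"
    using g by (simp add: powr_half_sqrt[symmetric] powr_add[symmetric])
  moreover have "exp (- g) * exp (- (sqrt g)\<^sup>2 / x) = exp (- ((1 + 1/x) * g))"
    using g x by (simp add: exp_add[symmetric] field_simps)
  moreover have "gamma_density p g * levy_density (sqrt g) x
      = (sqrt g * g powr (p - 1)) * (exp (- g) * exp (- (sqrt g)\<^sup>2 / x)) * (1 / (Gamma p * sqrt pi * x * sqrt x))"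
    using g x unfolding gamma_density_def levy_density_def by (simp add: mult_ac)
  ultimately show ?thesis
    using g by simp
qed simp

lemma beta_prime_density_half_eq:
  assumes x: "x > 0"
  shows "1 / (Gamma p * sqrt pi * x * sqrt x) * (Gamma (p + 1/2) / (1 + 1/x) powr (p + 1/2))
       = beta_prime_density p (1/2) x"
proof -
  have "1 + 1/x = (1 + x) / x"
    using x by (simp add: field_simps)
  then have k_powr: "(1 + 1/x) powr (p + 1/2) = (1 + x) powr (p + 1/2) / x powr (p + 1/2)"
    using x by (simp add: powr_divide)
  have "x powr (p + 1/2) = x powr ((p - 1) + 1 + 1/2)"
    by simp
  also have "\<dots> = x powr (p - 1) * x powr 1 * x powr (1/2)"
    by (simp only: powr_add)
  finally have x_powr: "x powr (p + 1/2) = x powr (p - 1) * (x * sqrt x)"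
    using x by (simp add: powr_half_sqrt)
  show ?thesis
    unfolding beta_prime_density_def k_powr x_powr using x
    by (simp add: Gamma_one_half_real field_simps)
qed

lemma beta_prime_density_half_eq_gamma_mixture:
  assumes p: "p > 0"
  shows "ennreal (beta_prime_density p (1/2) x)
       = (\<integral>\<^sup>+g. ennreal (gamma_density p g) * ennreal (levy_density (sqrt g) x) \<partial>lborel)"
proof (cases "x > 0")
  case False
  then show ?thesis by (simp add: beta_prime_density_def levy_density_def)
next
  case x: True
  define K where "K = 1 / (Gamma p * sqrt pi * x * sqrt x)"
  define k where "k = 1 + 1/x"
  have K: "K > 0" unfolding K_def using x p by (auto intro!: Gamma_real_pos)
  have k: "k > 0" unfolding k_def using x by (auto intro: add_pos_nonneg)
  have "ennreal (gamma_density p g) * ennreal (levy_density (sqrt g) x)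
      = ennreal (gamma_density p g * levy_density (sqrt g) x)" for g
    using p by (cases "g > 0") (simp_all add: ennreal_mult gamma_density_nonneg levy_density_nonneg)
  then have "(\<integral>\<^sup>+g. ennreal (gamma_density p g) * ennreal (levy_density (sqrt g) x) \<partial>lborel)
      = (\<integral>\<^sup>+g. ennreal (gamma_density p g * levy_density (sqrt g) x) \<partial>lborel)"
    by simp
  also have "\<dots> = (\<integral>\<^sup>+g. ennreal K * ennreal (indicator {0<..} g * g powr (p + 1/2 - 1) * exp (- (k * g))) \<partial>lborel)"
    unfolding gamma_density_mult_levy_density_sqrt[OF x] K_def[symmetric] k_def[symmetric]
    using K by (intro nn_integral_cong) (simp add: ennreal_mult)
  also have "\<dots> = ennreal K * (\<integral>\<^sup>+g. ennreal (indicator {0<..} g * g powr (p + 1/2 - 1) * exp (- (k * g))) \<partial>lborel)"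
    by (rule nn_integral_cmult) measurable
  also have "\<dots> = ennreal K * ennreal (Gamma (p + 1/2) / k powr (p + 1/2))"
    using p k by (subst nn_integral_gamma_kernel) auto
  also have "\<dots> = ennreal (K * (Gamma (p + 1/2) / k powr (p + 1/2)))"
    using p k K by (subst ennreal_mult) (auto intro!: divide_nonneg_nonneg less_imp_le)
  also have "K * (Gamma (p + 1/2) / k powr (p + 1/2)) = beta_prime_density p (1/2) x"
    unfolding K_def k_def by (rule beta_prime_density_half_eq[OF x])
  finally show ?thesis ..
qed

lemma nn_integral_beta_prime_density_half:
  assumes p: "p > 0" and [measurable]: "H \<in> borel_measurable borel"
  shows "(\<integral>\<^sup>+x. ennreal (beta_prime_density p (1/2) x) * H x \<partial>lborel)
       = (\<integral>\<^sup>+g. ennreal (gamma_density p g) * (\<integral>\<^sup>+x. ennreal (levy_density (sqrt g) x) * H x \<partial>lborel) \<partial>lborel)"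
proof -
  have "(\<integral>\<^sup>+x. ennreal (beta_prime_density p (1/2) x) * H x \<partial>lborel)
      = (\<integral>\<^sup>+x. \<integral>\<^sup>+g. ennreal (gamma_density p g) * (ennreal (levy_density (sqrt g) x) * H x) \<partial>lborel \<partial>lborel)"
    using p by (intro nn_integral_cong)
      (simp add: beta_prime_density_half_eq_gamma_mixture nn_integral_multc[symmetric] mult.assoc)
  also have "\<dots> = (\<integral>\<^sup>+g. \<integral>\<^sup>+x. ennreal (gamma_density p g) * (ennreal (levy_density (sqrt g) x) * H x) \<partial>lborel \<partial>lborel)"
    by (rule lborel_pair.Fubini') measurable
  also have "\<dots> = (\<integral>\<^sup>+g. ennreal (gamma_density p g) * (\<integral>\<^sup>+x. ennreal (levy_density (sqrt g) x) * H x \<partial>lborel) \<partial>lborel)"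
    by (intro nn_integral_cong nn_integral_cmult) measurable
  finally show ?thesis .
qed

lemma nn_integral_levy_density_scale:
  assumes c: "c \<ge> 0" and k: "k > 0" and [measurable]: "\<phi> \<in> borel_measurable borel"
  shows "(\<integral>\<^sup>+u. ennreal (levy_density c u) * \<phi> (k * u) \<partial>lborel)
       = (\<integral>\<^sup>+s. ennreal (levy_density (c * sqrt k) s) * \<phi> s \<partial>lborel)"
proof -
  have scale: "k * levy_density (c * sqrt k) (k * u) = levy_density c u" for u
    using k c by (cases "u > 0")
      (simp_all add: levy_density_def zero_less_mult_iff real_sqrt_mult power_mult_distrib field_simps)
  have "(\<integral>\<^sup>+s. ennreal (levy_density (c * sqrt k) s) * \<phi> s \<partial>lborel)
     = ennreal \<bar>k\<bar> * (\<integral>\<^sup>+u. ennreal (levy_density (c * sqrt k) (0 + k * u)) * \<phi> (0 + k * u) \<partial>lborel)"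
    by (rule nn_integral_real_affine) (use k in auto)
  also have "\<dots> = (\<integral>\<^sup>+u. ennreal (k * levy_density (c * sqrt k) (k * u)) * \<phi> (k * u) \<partial>lborel)"
    using k c by (subst nn_integral_cmult[symmetric]) (auto simp: ennreal_mult levy_density_nonneg mult.assoc)
  finally show ?thesis
    by (simp add: scale)
qed

lemma nn_integral_Cauchy_Schloemilch:
  assumes s: "s > 0" and b: "b > 0" and c: "c > 0"
  shows "(\<integral>\<^sup>+q. ennreal (exp (- (c * q - b / q)\<^sup>2 / s)) * ennreal (c + b / q\<^sup>2) * indicator {0<..} q \<partial>lborel)
       = ennreal (sqrt (pi * s))"
proof -
  let ?g = "\<lambda>q::real. c * q - b / q"
  have "w \<in> ?g ` {0<..}" for w
  proof -
    define r where "r = sqrt (w\<^sup>2 + 4 * b * c)"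
    have r2: "r\<^sup>2 = w\<^sup>2 + 4 * b * c"
      unfolding r_def using b c by simp
    have "r > \<bar>w\<bar>"
      unfolding r_def using b c by (simp add: real_less_rsqrt power2_abs)
    define q where "q = (w + r) / (2 * c)"
    have q: "q > 0"
      unfolding q_def using \<open>r > \<bar>w\<bar>\<close> c by (auto intro!: divide_pos_pos)
    have "c * q * q - b = w * q"
      unfolding q_def using c r2 by (simp add: field_simps power2_eq_square)
    then have "w = ?g q"
      using q by (simp add: field_simps)
    then show ?thesis
      using q by blast
  qed
  then have onto: "?g ` einterval (ereal 0) \<infinity> = UNIV"
    by auto
  have "(\<integral>\<^sup>+w. ennreal (exp (- w\<^sup>2 / s)) * indicator (?g ` einterval (ereal 0) \<infinity>) w \<partial>lborel)
      = (\<integral>\<^sup>+q. ennreal (exp (- (?g q)\<^sup>2 / s)) * ennreal (c + b / q\<^sup>2) * indicator (einterval (ereal 0) \<infinity>) q \<partial>lborel)"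
    using b c by (intro nn_integral_substitution_einterval)
      (auto intro!: derivative_eq_intros continuous_intros simp: power2_eq_square field_simps)
  then show ?thesis
    using nn_integral_gaussian_kernel[OF s] onto by simp
qed

lemma image_divide_mult_greaterThan_0:
  fixes b c :: real
  assumes b: "b > 0" and c: "c > 0"
  shows "(\<lambda>p. b / (c * p)) ` {0<..} = {0<..}"
proof -
  have "q \<in> (\<lambda>p. b / (c * p)) ` {0<..}" if "q > 0" for q
    using that b c by (intro rev_image_eqI[of "b / (c * q)"]) (auto simp: field_simps)
  moreover have "b / (c * p) > 0" if "p > 0" for p
    using that b c by simp
  ultimately show ?thesis
    by auto
qed

lemma nn_integral_Cauchy_Schloemilch_reflect:
  assumes b: "b > 0" and c: "c > 0"
  shows "(\<integral>\<^sup>+q. ennreal ((1 + 1/q\<^sup>2) * exp (- (b/q - c*q)\<^sup>2 / s)) * indicator {0<..} q \<partial>lborel)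
       = (\<integral>\<^sup>+p. ennreal ((b / (c * p\<^sup>2) + c / b) * exp (- (b/p - c*p)\<^sup>2 / s)) * indicator {0<..} p \<partial>lborel)"
proof -
  define E where "E q = exp (- (b/q - c*q)\<^sup>2 / s)" for q
  have E: "E q > 0" for q
    unfolding E_def by simp
  let ?r = "\<lambda>p::real. b / (c * p)"
  have r_onto: "?r ` einterval (ereal 0) \<infinity> = {0<..}"
    using image_divide_mult_greaterThan_0[OF b c] by simp
  have "(\<integral>\<^sup>+q. ennreal ((1 + 1/q\<^sup>2) * E q) * indicator {0<..} q \<partial>lborel)
      = (\<integral>\<^sup>+q. ennreal ((1 + 1/q\<^sup>2) * E q) * indicator (?r ` einterval (ereal 0) \<infinity>) q \<partial>lborel)"
    unfolding r_onto ..
  also have "\<dots> = (\<integral>\<^sup>+p. ennreal ((1 + 1/(?r p)\<^sup>2) * E (?r p)) * ennreal (- (- b / (c * p\<^sup>2))) * indicator (einterval (ereal 0) \<infinity>) p \<partial>lborel)"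
  proof (rule nn_integral_substitution_einterval_antimono)
    show "?r ` einterval (ereal 0) \<infinity> \<in> sets borel"
      unfolding r_onto by simp
    show "(?r has_real_derivative - b / (c * p\<^sup>2)) (at p)" if "p \<in> einterval (ereal 0) \<infinity>" for p
      using that c by (auto intro!: derivative_eq_intros simp: power2_eq_square)
    show "continuous_on (einterval (ereal 0) \<infinity>) (\<lambda>p. - b / (c * p\<^sup>2))"
      using c by (intro continuous_intros) auto
    show "- b / (c * p\<^sup>2) \<le> 0" for p
      using b c by (simp add: divide_nonneg_nonneg)
  qed (simp_all add: E_def)
  also have "\<dots> = (\<integral>\<^sup>+p. ennreal ((b / (c * p\<^sup>2) + c / b) * E p) * indicator {0<..} p \<partial>lborel)"
  proof (intro nn_integral_cong)
    fix p :: real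
    show "ennreal ((1 + 1/(?r p)\<^sup>2) * E (?r p)) * ennreal (- (- b / (c * p\<^sup>2))) * indicator (einterval (ereal 0) \<infinity>) p
        = ennreal ((b / (c * p\<^sup>2) + c / b) * E p) * indicator {0<..} p"
    proof (cases "p > 0")
      case p: True
      have "E (?r p) = E p"
        unfolding E_def using p b c by (simp add: field_simps power2_eq_square)
      moreover have "(1 + 1/(?r p)\<^sup>2) * (b / (c * p\<^sup>2)) = b / (c * p\<^sup>2) + c / b"
        using p b c by (simp add: field_simps power2_eq_square)
      ultimately have "(1 + 1/(?r p)\<^sup>2) * E (?r p) * (b / (c * p\<^sup>2)) = (b / (c * p\<^sup>2) + c / b) * E p"
        by (simp add: mult_ac)
      then show ?thesis
        using p b c E[of "?r p"] by (simp add: ennreal_mult[symmetric] add_pos_pos)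
    qed simp
  qed
  finally show ?thesis
    unfolding E_def .
qed

text \<open>Cauchy-Schloemilch: the substitution q = b / (c p) preserves the Gaussian factor and turns the
  weight 1 + 1/q^2 into b / (c p^2) + c / b. The sum of both weights is (b + c) / (b c) times the
  derivative c + b / q^2 of c q - b / q, so twice the integral is Gaussian.\<close>
lemma nn_integral_Cauchy_Schloemilch_symmetric:
  assumes s: "s > 0" and b: "b > 0" and c: "c > 0"
  shows "(\<integral>\<^sup>+q. ennreal ((1 + 1/q\<^sup>2) * exp (- (b/q - c*q)\<^sup>2 / s)) * indicator {0<..} q \<partial>lborel)
       = ennreal ((b + c) / (2 * b * c) * sqrt (pi * s))"
proof -
  define E where "E q = exp (- (b/q - c*q)\<^sup>2 / s)" for q
  have E: "E q > 0" for q
    unfolding E_def by simp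
  have [measurable]: "E \<in> borel_measurable borel"
    unfolding E_def by measurable
  define J where "J = (\<integral>\<^sup>+q. ennreal ((1 + 1/q\<^sup>2) * E q) * indicator {0<..} q \<partial>lborel)"
  have "J + J = J + (\<integral>\<^sup>+q. ennreal ((b / (c * q\<^sup>2) + c / b) * E q) * indicator {0<..} q \<partial>lborel)"
    unfolding J_def E_def using nn_integral_Cauchy_Schloemilch_reflect[OF b c] by simp
  also have "\<dots> = (\<integral>\<^sup>+q. ennreal ((1 + 1/q\<^sup>2) * E q) * indicator {0<..} q + ennreal ((b / (c * q\<^sup>2) + c / b) * E q) * indicator {0<..} q \<partial>lborel)"
    unfolding J_def by (rule nn_integral_add[symmetric]) measurable
  also have "\<dots> = (\<integral>\<^sup>+q. ennreal ((b + c) / (b * c)) * (ennreal (exp (- (c * q - b / q)\<^sup>2 / s)) * ennreal (c + b / q\<^sup>2) * indicator {0<..} q) \<partial>lborel)"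
  proof (intro nn_integral_cong)
    fix q :: real
    show "ennreal ((1 + 1/q\<^sup>2) * E q) * indicator {0<..} q + ennreal ((b / (c * q\<^sup>2) + c / b) * E q) * indicator {0<..} q
      = ennreal ((b + c) / (b * c)) * (ennreal (exp (- (c * q - b / q)\<^sup>2 / s)) * ennreal (c + b / q\<^sup>2) * indicator {0<..} q)"
    proof (cases "q > 0")
      case q: True
      have "(1 + 1/q\<^sup>2) * E q + (b / (c * q\<^sup>2) + c / b) * E q = (b + c) / (b * c) * (E q * (c + b / q\<^sup>2))"
        using q b c by (simp add: field_simps power2_eq_square)
      then have "ennreal ((1 + 1/q\<^sup>2) * E q) + ennreal ((b / (c * q\<^sup>2) + c / b) * E q)
          = ennreal ((b + c) / (b * c)) * (ennreal (E q) * ennreal (c + b / q\<^sup>2))"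
        using q b c E[of q] by (simp add: ennreal_plus[symmetric] ennreal_mult[symmetric] del: ennreal_plus)
      moreover have "exp (- (c * q - b / q)\<^sup>2 / s) = E q"
        unfolding E_def by (simp add: power2_commute)
      ultimately show ?thesis
        using q by simp
    qed simp
  qed
  also have "\<dots> = ennreal ((b + c) / (b * c)) * ennreal (sqrt (pi * s))"
    using nn_integral_Cauchy_Schloemilch[OF s b c] by (subst nn_integral_cmult) auto
  also have "\<dots> = ennreal ((b + c) / (b * c) * sqrt (pi * s))"
    using b c s by (subst ennreal_mult) auto
  finally have "J + J = ennreal ((b + c) / (b * c) * sqrt (pi * s))" .
  moreover have "(b + c) / (b * c) * sqrt (pi * s) = (b + c) / (2 * b * c) * sqrt (pi * s) + (b + c) / (2 * b * c) * sqrt (pi * s)"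
    by (simp add: field_simps)
  ultimately have "J * 2 = ennreal ((b + c) / (2 * b * c) * sqrt (pi * s)) * 2"
    using b c s by (simp add: mult_2_right ennreal_plus[symmetric] del: ennreal_plus)
  then have "J = ennreal ((b + c) / (2 * b * c) * sqrt (pi * s))"
    using ennreal_mult_divide_eq[of 2 J] ennreal_mult_divide_eq[of 2 "ennreal ((b + c) / (2 * b * c) * sqrt (pi * s))"]
    by simp
  then show ?thesis
    unfolding J_def E_def .
qed

lemma levy_density_convolution_integrand:
  assumes b: "b > 0" and c: "c > 0" and s: "s > 0" and q: "q > 0"
  shows "levy_density b (s * q\<^sup>2 / (1 + q\<^sup>2)) * levy_density c (s - s * q\<^sup>2 / (1 + q\<^sup>2)) * (2 * s * q / (1 + q\<^sup>2)\<^sup>2)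
       = 2 * b * c / (pi * s\<^sup>2) * exp (- (b + c)\<^sup>2 / s) * ((1 + 1/q\<^sup>2) * exp (- (b/q - c*q)\<^sup>2 / s))"
proof -
  define Q where "Q = 1 + q\<^sup>2"
  define x where "x = s * q\<^sup>2 / Q"
  define y where "y = s / Q"
  have Q: "Q > 0"
    unfolding Q_def by (simp add: add_pos_nonneg)
  have y: "s - s * q\<^sup>2 / Q = y"
    unfolding y_def Q_def using Q by (simp add: Q_def field_simps)
  have x_pos: "x > 0" and y_pos: "y > 0"
    unfolding x_def y_def using s q Q by simp_all
  have xy: "x * y = (s * q / Q)\<^sup>2"
    unfolding x_def y_def using Q by (simp add: field_simps power2_eq_square)
  then have "sqrt (x * y) = s * q / Q"
    using s q Q by simp
  then have sqrt_xy: "sqrt x * sqrt y = s * q / Q"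
    by (simp add: real_sqrt_mult)
  have sum: "b\<^sup>2 / x + c\<^sup>2 / y = ((b + c)\<^sup>2 + (b/q - c*q)\<^sup>2) / s"
    using Q q s unfolding x_def y_def Q_def by (simp add: field_simps power2_eq_square)
  have exps: "exp (- b\<^sup>2 / x) * exp (- c\<^sup>2 / y) = exp (- (b + c)\<^sup>2 / s) * exp (- (b/q - c*q)\<^sup>2 / s)"
  proof -
    have "exp (- b\<^sup>2 / x) * exp (- c\<^sup>2 / y) = exp (- (b\<^sup>2 / x + c\<^sup>2 / y))"
      by (simp add: exp_add[symmetric])
    also have "\<dots> = exp (- (b + c)\<^sup>2 / s + - (b/q - c*q)\<^sup>2 / s)"
      unfolding sum by (simp add: add_divide_distrib)
    also have "\<dots> = exp (- (b + c)\<^sup>2 / s) * exp (- (b/q - c*q)\<^sup>2 / s)"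
      by (rule exp_add)
    finally show ?thesis .
  qed
  have "levy_density b x * levy_density c y
      = b * c / (sqrt pi * sqrt pi * (x * y) * (sqrt x * sqrt y)) * (exp (- b\<^sup>2 / x) * exp (- c\<^sup>2 / y))"
    unfolding levy_density_def using x_pos y_pos by (simp add: field_simps)
  also have "\<dots> = b * c / (pi * (s * q / Q)\<^sup>2 * (s * q / Q)) * (exp (- (b + c)\<^sup>2 / s) * exp (- (b/q - c*q)\<^sup>2 / s))"
    unfolding xy sqrt_xy exps by simp
  finally have "levy_density b x * levy_density c y * (2 * s * q / Q\<^sup>2)
      = b * c / (pi * (s * q / Q)\<^sup>2 * (s * q / Q)) * (exp (- (b + c)\<^sup>2 / s) * exp (- (b/q - c*q)\<^sup>2 / s)) * (2 * s * q / Q\<^sup>2)"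
    by simp
  also have "\<dots> = 2 * b * c / (pi * s\<^sup>2) * exp (- (b + c)\<^sup>2 / s) * ((Q / q\<^sup>2) * exp (- (b/q - c*q)\<^sup>2 / s))"
    using q s Q by (simp add: field_simps power2_eq_square)
  also have "Q / q\<^sup>2 = 1 + 1/q\<^sup>2"
    using q unfolding Q_def by (simp add: field_simps)
  finally show ?thesis
    using y unfolding x_def Q_def by simp
qed

lemma image_mult_square_divide_one_plus_square:
  fixes s :: real
  assumes s: "s > 0"
  shows "(\<lambda>q. s * q\<^sup>2 / (1 + q\<^sup>2)) ` {0<..} = {0<..<s}"
proof -
  have "x \<in> (\<lambda>q. s * q\<^sup>2 / (1 + q\<^sup>2)) ` {0<..}" if "0 < x" "x < s" for x
  proof (rule rev_image_eqI)
    show "sqrt (x / (s - x)) \<in> {0<..}"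
      using that by simp
    show "x = s * (sqrt (x / (s - x)))\<^sup>2 / (1 + (sqrt (x / (s - x)))\<^sup>2)"
      using that by (simp add: field_simps)
  qed
  moreover have "0 < s * q\<^sup>2 / (1 + q\<^sup>2) \<and> s * q\<^sup>2 / (1 + q\<^sup>2) < s" if "q > 0" for q :: real
  proof -
    have "1 + q\<^sup>2 > 0"
      by (simp add: add_pos_nonneg)
    then show ?thesis
      using that s by (simp add: field_simps)
  qed
  ultimately show ?thesis
    by auto
qed

text \<open>Substituting x = s q^2 / (1 + q^2) splits the exponent b^2 / x + c^2 / (s - x) of the
  integrand into ((b + c)^2 + (b / q - c q)^2) / s.\<close>
lemma nn_integral_levy_density_convolution_substitution:
  assumes b: "b > 0" and c: "c > 0" and s: "s > 0"
  defines "K \<equiv> 2 * b * c / (pi * s\<^sup>2) * exp (- (b + c)\<^sup>2 / s)"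
  shows "(\<integral>\<^sup>+x. ennreal (levy_density b x * levy_density c (s - x)) \<partial>lborel)
       = (\<integral>\<^sup>+q. ennreal K * (ennreal ((1 + 1/q\<^sup>2) * exp (- (b/q - c*q)\<^sup>2 / s)) * indicator {0<..} q) \<partial>lborel)"
proof -
  have K: "K > 0"
    unfolding K_def using b c s by simp
  let ?g = "\<lambda>q::real. s * q\<^sup>2 / (1 + q\<^sup>2)"
  have nonzero: "1 + q\<^sup>2 \<noteq> 0" for q :: real
    by (metis add_pos_nonneg zero_le_power2 zero_less_one less_irrefl)
  have g_onto: "?g ` einterval (ereal 0) \<infinity> = {0<..<s}"
    using image_mult_square_divide_one_plus_square[OF s] by simp
  have "(\<integral>\<^sup>+x. ennreal (levy_density b x * levy_density c (s - x)) \<partial>lborel)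
      = (\<integral>\<^sup>+x. ennreal (levy_density b x * levy_density c (s - x)) * indicator (?g ` einterval (ereal 0) \<infinity>) x \<partial>lborel)"
    unfolding g_onto by (intro nn_integral_cong) (auto simp: levy_density_def indicator_def)
  also have "\<dots> = (\<integral>\<^sup>+q. ennreal (levy_density b (?g q) * levy_density c (s - ?g q)) * ennreal (2 * s * q / (1 + q\<^sup>2)\<^sup>2) * indicator (einterval (ereal 0) \<infinity>) q \<partial>lborel)"
  proof (rule nn_integral_substitution_einterval)
    show "(?g has_real_derivative 2 * s * q / (1 + q\<^sup>2)\<^sup>2) (at q)" for q
      using nonzero[of q] by (auto intro!: derivative_eq_intros simp: field_simps power2_eq_square)
    show "continuous_on (einterval (ereal 0) \<infinity>) (\<lambda>q. 2 * s * q / (1 + q\<^sup>2)\<^sup>2)"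
      using nonzero by (intro continuous_intros) auto
    show "0 \<le> 2 * s * q / (1 + q\<^sup>2)\<^sup>2" if "q \<in> einterval (ereal 0) \<infinity>" for q
      using that s by simp
  qed simp_all
  also have "\<dots> = (\<integral>\<^sup>+q. ennreal K * (ennreal ((1 + 1/q\<^sup>2) * exp (- (b/q - c*q)\<^sup>2 / s)) * indicator {0<..} q) \<partial>lborel)"
  proof (intro nn_integral_cong)
    fix q :: real
    show "ennreal (levy_density b (?g q) * levy_density c (s - ?g q)) * ennreal (2 * s * q / (1 + q\<^sup>2)\<^sup>2) * indicator (einterval (ereal 0) \<infinity>) q
        = ennreal K * (ennreal ((1 + 1/q\<^sup>2) * exp (- (b/q - c*q)\<^sup>2 / s)) * indicator {0<..} q)"
    proof (cases "q > 0")
      case q: True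
      have "ennreal (levy_density b (?g q) * levy_density c (s - ?g q)) * ennreal (2 * s * q / (1 + q\<^sup>2)\<^sup>2)
          = ennreal (levy_density b (?g q) * levy_density c (s - ?g q) * (2 * s * q / (1 + q\<^sup>2)\<^sup>2))"
        using q s b c by (subst ennreal_mult') (auto simp: levy_density_nonneg)
      also have "\<dots> = ennreal (K * ((1 + 1/q\<^sup>2) * exp (- (b/q - c*q)\<^sup>2 / s)))"
        unfolding K_def by (rule arg_cong[where f=ennreal], rule levy_density_convolution_integrand[OF b c s q])
      also have "\<dots> = ennreal K * ennreal ((1 + 1/q\<^sup>2) * exp (- (b/q - c*q)\<^sup>2 / s))"
        using K q by (subst ennreal_mult) (auto simp: add_nonneg_nonneg)
      finally show ?thesis
        using q by simp
    qed simp
  qed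
  finally show ?thesis .
qed

lemma levy_density_add_eq:
  assumes s: "s > 0" and b: "b > 0" and c: "c > 0"
  shows "2 * b * c / (pi * s\<^sup>2) * exp (- (b + c)\<^sup>2 / s) * ((b + c) / (2 * b * c) * sqrt (pi * s))
       = levy_density (b + c) s"
proof -
  define P where "P = sqrt pi"
  define S where "S = sqrt s"
  have P: "pi = P * P" "P > 0" and S: "s = S * S" "S > 0"
    unfolding P_def S_def using s by simp_all
  have "sqrt (pi * s) = P * S"
    unfolding P_def S_def by (simp add: real_sqrt_mult)
  moreover have "levy_density (b + c) s = (b + c) / (P * s * S) * exp (- (b + c)\<^sup>2 / s)"
    unfolding levy_density_def P_def S_def using s by simp
  moreover have "2 * b * c / (pi * s\<^sup>2) * exp (- (b + c)\<^sup>2 / s) * ((b + c) / (2 * b * c) * (P * S))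
      = (b + c) / (P * s * S) * exp (- (b + c)\<^sup>2 / s)"
    unfolding P(1) S(1) using P(2) S(2) b c by (simp add: field_simps power2_eq_square)
  ultimately show ?thesis
    by simp
qed

lemma levy_density_convolution:
  assumes b: "b > 0" and c: "c > 0"
  shows "(\<integral>\<^sup>+x. ennreal (levy_density b x * levy_density c (s - x)) \<partial>lborel) = ennreal (levy_density (b + c) s)"
proof (cases "s > 0")
  case False
  then have vanish: "levy_density b x * levy_density c (s - x) = 0" for x
    by (simp add: levy_density_def)
  show ?thesis
    unfolding vanish using False by (simp add: levy_density_def)
next
  case s: True
  define K where "K = 2 * b * c / (pi * s\<^sup>2) * exp (- (b + c)\<^sup>2 / s)"
  have "(\<integral>\<^sup>+x. ennreal (levy_density b x * levy_density c (s - x)) \<partial>lborel)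
      = (\<integral>\<^sup>+q. ennreal K * (ennreal ((1 + 1/q\<^sup>2) * exp (- (b/q - c*q)\<^sup>2 / s)) * indicator {0<..} q) \<partial>lborel)"
    unfolding K_def by (rule nn_integral_levy_density_convolution_substitution[OF b c s])
  also have "\<dots> = ennreal K * ennreal ((b + c) / (2 * b * c) * sqrt (pi * s))"
    using nn_integral_Cauchy_Schloemilch_symmetric[OF s b c] by (subst nn_integral_cmult) auto
  also have "\<dots> = ennreal (K * ((b + c) / (2 * b * c) * sqrt (pi * s)))"
    using b c s unfolding K_def by (subst ennreal_mult[symmetric]) auto
  also have "\<dots> = ennreal (levy_density (b + c) s)"
    unfolding K_def levy_density_add_eq[OF s b c] ..
  finally show ?thesis .
qed

lemma nn_integral_levy_density_sum:
  assumes b: "b > 0" and c: "c > 0" and [measurable]: "\<phi> \<in> borel_measurable borel"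
  shows "(\<integral>\<^sup>+y. ennreal (levy_density c y) * (\<integral>\<^sup>+x. ennreal (levy_density b x) * \<phi> (x + y) \<partial>lborel) \<partial>lborel)
       = (\<integral>\<^sup>+s. ennreal (levy_density (b + c) s) * \<phi> s \<partial>lborel)"
proof -
  have "(\<integral>\<^sup>+y. ennreal (levy_density c y) * (\<integral>\<^sup>+x. ennreal (levy_density b x) * \<phi> (x + y) \<partial>lborel) \<partial>lborel)
      = (\<integral>\<^sup>+x. ennreal (levy_density b x) * (\<integral>\<^sup>+y. ennreal (levy_density c y) * \<phi> (x + y) \<partial>lborel) \<partial>lborel)"
    by (rule nn_integral_mult_nn_integral_swap) measurable
  also have "\<dots> = (\<integral>\<^sup>+x. \<integral>\<^sup>+s. ennreal (levy_density b x * levy_density c (s - x)) * \<phi> s \<partial>lborel \<partial>lborel)"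
  proof (rule nn_integral_cong)
    fix x :: real
    have "(\<integral>\<^sup>+y. ennreal (levy_density c y) * \<phi> (x + y) \<partial>lborel) = (\<integral>\<^sup>+s. ennreal (levy_density c (s - x)) * \<phi> s \<partial>lborel)"
      by (subst nn_integral_lborel_shift[where x=x]) auto
    then show "ennreal (levy_density b x) * (\<integral>\<^sup>+y. ennreal (levy_density c y) * \<phi> (x + y) \<partial>lborel)
        = (\<integral>\<^sup>+s. ennreal (levy_density b x * levy_density c (s - x)) * \<phi> s \<partial>lborel)"
      using b c by (simp add: nn_integral_cmult[symmetric] ennreal_mult levy_density_nonneg mult.assoc)
  qed
  also have "\<dots> = (\<integral>\<^sup>+s. \<integral>\<^sup>+x. ennreal (levy_density b x * levy_density c (s - x)) * \<phi> s \<partial>lborel \<partial>lborel)"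
    by (rule lborel_pair.Fubini') measurable
  also have "\<dots> = (\<integral>\<^sup>+s. ennreal (levy_density (b + c) s) * \<phi> s \<partial>lborel)"
    by (simp add: nn_integral_multc levy_density_convolution[OF b c])
  finally show ?thesis .
qed

lemma gamma_density_mult_eq_beta_density:
  assumes a: "a > 0" and b: "b > 0" and g: "g > 0"
  shows "g * (gamma_density a (g * t) * gamma_density b (g - g * t))
       = gamma_density (a + b) g * beta_density a b t"
proof (cases "0 < t \<and> t < 1")
  case False
  then consider "t \<le> 0" | "1 \<le> t"
    by linarith
  then have "g * t \<le> 0 \<or> g - g * t \<le> 0"
    using g mult_left_mono[of 1 t g] by cases (simp_all add: mult_nonneg_nonpos)
  then show ?thesis
    using False by (auto simp: beta_density_def)
next
  case True
  then have t: "0 < t" "t < 1" by auto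
  have G: "Gamma a > 0" "Gamma b > 0" "Gamma (a + b) > 0"
    using a b by (auto intro!: Gamma_real_pos)
  have gt: "g * t > 0" "g - g * t > 0" "g - g * t = g * (1 - t)"
    using g t by (simp_all add: algebra_simps)
  have powrs: "(g * t) powr (a - 1) = g powr (a - 1) * t powr (a - 1)"
    "(g * (1 - t)) powr (b - 1) = g powr (b - 1) * (1 - t) powr (b - 1)"
    using g t by (simp_all add: powr_mult)
  have g_powr: "g * g powr (a - 1) * g powr (b - 1) = g powr (a + b - 1)"
  proof -
    have "g powr 1 * g powr (a - 1) * g powr (b - 1) = g powr (1 + (a - 1) + (b - 1))"
      by (simp only: powr_add)
    then show ?thesis
      using g by (simp add: algebra_simps)
  qed
  have exps: "exp (- (g * t)) * exp (- (g * (1 - t))) = exp (- g)"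
    by (simp add: exp_add[symmetric] algebra_simps)
  have "g * (gamma_density a (g * t) * gamma_density b (g - g * t))
      = (g * g powr (a - 1) * g powr (b - 1)) * (exp (- (g * t)) * exp (- (g * (1 - t))))
        * (t powr (a - 1) * (1 - t) powr (b - 1)) / (Gamma a * Gamma b)"
    using gt unfolding gamma_density_def by (simp add: powrs mult_ac)
  also have "\<dots> = gamma_density (a + b) g * beta_density a b t"
    using g t G unfolding g_powr exps gamma_density_def beta_density_def by (simp add: field_simps)
  finally show ?thesis .
qed

lemma nn_integral_gamma_density_pair:
  assumes a: "a > 0" and b: "b > 0"
    and [measurable]: "(\<lambda>(x, y). F x y) \<in> borel_measurable (borel \<Otimes>\<^sub>M borel)"
  shows "(\<integral>\<^sup>+x. ennreal (gamma_density a x) * (\<integral>\<^sup>+y. ennreal (gamma_density b y) * F x y \<partial>lborel) \<partial>lborel)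
       = (\<integral>\<^sup>+g. ennreal (gamma_density (a + b) g) * (\<integral>\<^sup>+t. ennreal (beta_density a b t) * F (g * t) (g - g * t) \<partial>lborel) \<partial>lborel)"
proof -
  have "(\<integral>\<^sup>+x. ennreal (gamma_density a x) * (\<integral>\<^sup>+y. ennreal (gamma_density b y) * F x y \<partial>lborel) \<partial>lborel)
      = (\<integral>\<^sup>+x. \<integral>\<^sup>+g. ennreal (gamma_density a x * gamma_density b (g - x)) * F x (g - x) \<partial>lborel \<partial>lborel)"
  proof (rule nn_integral_cong)
    fix x :: real
    have "(\<integral>\<^sup>+y. ennreal (gamma_density b y) * F x y \<partial>lborel) = (\<integral>\<^sup>+g. ennreal (gamma_density b (g - x)) * F x (g - x) \<partial>lborel)"
      by (subst nn_integral_lborel_shift[where x=x]) auto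
    then show "ennreal (gamma_density a x) * (\<integral>\<^sup>+y. ennreal (gamma_density b y) * F x y \<partial>lborel)
        = (\<integral>\<^sup>+g. ennreal (gamma_density a x * gamma_density b (g - x)) * F x (g - x) \<partial>lborel)"
      using a b by (simp add: nn_integral_cmult[symmetric] ennreal_mult gamma_density_nonneg mult.assoc)
  qed
  also have "\<dots> = (\<integral>\<^sup>+g. \<integral>\<^sup>+x. ennreal (gamma_density a x * gamma_density b (g - x)) * F x (g - x) \<partial>lborel \<partial>lborel)"
    by (rule lborel_pair.Fubini') measurable
  also have "\<dots> = (\<integral>\<^sup>+g. ennreal (gamma_density (a + b) g) * (\<integral>\<^sup>+t. ennreal (beta_density a b t) * F (g * t) (g - g * t) \<partial>lborel) \<partial>lborel)"
  proof (rule nn_integral_cong)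
    fix g :: real
    show "(\<integral>\<^sup>+x. ennreal (gamma_density a x * gamma_density b (g - x)) * F x (g - x) \<partial>lborel)
        = ennreal (gamma_density (a + b) g) * (\<integral>\<^sup>+t. ennreal (beta_density a b t) * F (g * t) (g - g * t) \<partial>lborel)"
    proof (cases "g > 0")
      case False
      then have vanish: "gamma_density a x * gamma_density b (g - x) = 0" for x
        by (cases "x > 0") simp_all
      show ?thesis
        unfolding vanish using False by simp
    next
      case g: True
      have "(\<integral>\<^sup>+x. ennreal (gamma_density a x * gamma_density b (g - x)) * F x (g - x) \<partial>lborel)
          = ennreal \<bar>g\<bar> * (\<integral>\<^sup>+t. ennreal (gamma_density a (0 + g * t) * gamma_density b (g - (0 + g * t))) * F (0 + g * t) (g - (0 + g * t)) \<partial>lborel)"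
        by (rule nn_integral_real_affine) (use g in auto)
      also have "\<dots> = (\<integral>\<^sup>+t. ennreal (g * (gamma_density a (g * t) * gamma_density b (g - g * t))) * F (g * t) (g - g * t) \<partial>lborel)"
        using g a b by (subst nn_integral_cmult[symmetric]) (auto simp: ennreal_mult gamma_density_nonneg mult.assoc)
      also have "\<dots> = (\<integral>\<^sup>+t. ennreal (gamma_density (a + b) g) * (ennreal (beta_density a b t) * F (g * t) (g - g * t)) \<partial>lborel)"
        using a b g by (simp add: gamma_density_mult_eq_beta_density ennreal_mult gamma_density_nonneg
            beta_density_nonneg mult.assoc)
      finally show ?thesis
        by (simp add: nn_integral_cmult)
    qed
  qed
  finally show ?thesis .
qed

lemma sqrt_add_sqrt_one_minus:
  assumes v: "0 < v" "v < 1"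
  defines "t \<equiv> (1 - sqrt (1 - v)) / 2"
  shows "t * (1 - t) = v / 4" "sqrt t + sqrt (1 - t) = sqrt (1 + sqrt v)" "0 < t" "t < 1/2"
proof -
  have r: "sqrt (1 - v) * sqrt (1 - v) = 1 - v" "0 < sqrt (1 - v)" "sqrt (1 - v) < 1"
    using v by auto
  show tt: "t * (1 - t) = v / 4"
    unfolding t_def using r by (simp add: field_simps)
  show "0 < t" "t < 1/2"
    unfolding t_def using r by auto
  then have "sqrt t * sqrt (1 - t) = sqrt v / 2"
    by (simp add: real_sqrt_mult[symmetric] tt real_sqrt_divide)
  then have "(sqrt t + sqrt (1 - t))\<^sup>2 = 1 + sqrt v"
    using \<open>0 < t\<close> \<open>t < 1/2\<close> by (simp add: power2_eq_square algebra_simps)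
  moreover have "0 \<le> sqrt t + sqrt (1 - t)"
    using \<open>0 < t\<close> \<open>t < 1/2\<close> by simp
  ultimately show "sqrt t + sqrt (1 - t) = sqrt (1 + sqrt v)"
    using real_sqrt_unique by metis
qed

lemma image_half_one_minus_sqrt_one_minus:
  "(\<lambda>v::real. (1 - sqrt (1 - v)) / 2) ` {0<..<1} = {0<..<1/2}"
proof -
  have "t \<in> (\<lambda>v. (1 - sqrt (1 - v)) / 2) ` {0<..<1}" if "0 < t" "t < 1/2" for t :: real
  proof (rule rev_image_eqI)
    have square: "1 - 4 * t * (1 - t) = (1 - 2 * t)\<^sup>2"
      by (simp add: power2_eq_square algebra_simps)
    moreover have "0 < (1 - 2 * t)\<^sup>2"
      using that by simp
    ultimately have "4 * t * (1 - t) < 1"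
      by linarith
    then show "4 * t * (1 - t) \<in> {0<..<1}"
      using that by simp
    show "t = (1 - sqrt (1 - 4 * t * (1 - t))) / 2"
      using that square by simp
  qed
  moreover have "0 < (1 - sqrt (1 - v)) / 2 \<and> (1 - sqrt (1 - v)) / 2 < 1/2" if "0 < v" "v < 1" for v :: real
    using sqrt_add_sqrt_one_minus(3,4)[OF that] by simp
  ultimately show ?thesis
    by auto
qed

lemma beta_kernel_half_one_minus_sqrt_one_minus:
  assumes v: "0 < v" "v < 1"
  defines "t \<equiv> (1 - sqrt (1 - v)) / 2"
  shows "t powr (a - 1) * (1 - t) powr (a - 1) * (1 / (4 * sqrt (1 - v)))
       = 4 powr (- a) * (v powr (a - 1) * (1 - v) powr (- 1/2))"
proof -
  have "t powr (a - 1) * (1 - t) powr (a - 1) * (1 / (4 * sqrt (1 - v)))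
      = (v / 4) powr (a - 1) * (1 / (4 * sqrt (1 - v)))"
    unfolding t_def by (simp only: powr_mult[symmetric] sqrt_add_sqrt_one_minus(1)[OF v])
  also have "\<dots> = 4 powr (- a) * (v powr (a - 1) * (1 - v) powr (- 1/2))"
    using v by (simp add: powr_divide powr_diff powr_minus_divide powr_half_sqrt field_simps)
  finally show ?thesis .
qed

text \<open>The symmetry t \<mapsto> 1 - t halves the integral, and on (0, 1/2) the substitution
  v = 4 t (1 - t) turns sqrt t + sqrt (1 - t) into sqrt (1 + sqrt v).\<close>
lemma nn_integral_beta_kernel_sqrt_sum:
  fixes ch :: "real \<Rightarrow> ennreal"
  assumes a: "a > 0" and [measurable]: "ch \<in> borel_measurable borel"
  shows "(\<integral>\<^sup>+t. ennreal (indicator {0<..<1} t * (t powr (a - 1) * (1 - t) powr (a - 1))) * ch (sqrt t + sqrt (1 - t)) \<partial>lborel)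
     = ennreal (2 * 4 powr (- a)) * (\<integral>\<^sup>+v. ennreal (indicator {0<..<1} v * (v powr (a - 1) * (1 - v) powr (- 1/2))) * ch (sqrt (1 + sqrt v)) \<partial>lborel)"
proof -
  define F where "F t = ennreal (indicator {0<..<1} t * (t powr (a - 1) * (1 - t) powr (a - 1))) * ch (sqrt t + sqrt (1 - t))" for t
  have [measurable]: "F \<in> borel_measurable borel"
    unfolding F_def by measurable
  have "F (2 * (1/2) - t) = F t" for t
  proof -
    have "indicator {0<..<1} (1 - t) = (indicator {0<..<1} t :: real)"
      by (auto simp: indicator_def)
    then show ?thesis
      unfolding F_def by (simp add: mult.commute add.commute)
  qed
  then have F_halves: "(\<integral>\<^sup>+t. F t \<partial>lborel) = 2 * (\<integral>\<^sup>+t. F t * indicator {..<1/2} t \<partial>lborel)"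
    by (rule nn_integral_split_symmetric[rotated]) measurable
  let ?h = "\<lambda>v::real. (1 - sqrt (1 - v)) / 2"
  have "(\<integral>\<^sup>+t. F t * indicator {..<1/2} t \<partial>lborel)
      = (\<integral>\<^sup>+t. ennreal (t powr (a - 1) * (1 - t) powr (a - 1)) * ch (sqrt t + sqrt (1 - t)) * indicator (?h ` einterval (ereal 0) (ereal 1)) t \<partial>lborel)"
    unfolding einterval_eq_Icc image_half_one_minus_sqrt_one_minus F_def
    by (intro nn_integral_cong) (auto simp: indicator_def)
  also have "\<dots> = (\<integral>\<^sup>+v. ennreal ((?h v) powr (a - 1) * (1 - ?h v) powr (a - 1)) * ch (sqrt (?h v) + sqrt (1 - ?h v)) * ennreal (1 / (4 * sqrt (1 - v))) * indicator (einterval (ereal 0) (ereal 1)) v \<partial>lborel)"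
  proof (rule nn_integral_substitution_einterval)
    show "(?h has_real_derivative 1 / (4 * sqrt (1 - v))) (at v)" "0 \<le> 1 / (4 * sqrt (1 - v))"
      if "v \<in> einterval (ereal 0) (ereal 1)" for v
      using that by (auto intro!: derivative_eq_intros simp: field_simps)
    show "continuous_on (einterval (ereal 0) (ereal 1)) (\<lambda>v. 1 / (4 * sqrt (1 - v)))"
      by (intro continuous_intros) auto
  qed auto
  also have "\<dots> = (\<integral>\<^sup>+v. ennreal (4 powr (- a)) * (ennreal (indicator {0<..<1} v * (v powr (a - 1) * (1 - v) powr (- 1/2))) * ch (sqrt (1 + sqrt v))) \<partial>lborel)"
  proof (intro nn_integral_cong)
    fix v :: real
    show "ennreal ((?h v) powr (a - 1) * (1 - ?h v) powr (a - 1)) * ch (sqrt (?h v) + sqrt (1 - ?h v)) * ennreal (1 / (4 * sqrt (1 - v))) * indicator (einterval (ereal 0) (ereal 1)) v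
      = ennreal (4 powr (- a)) * (ennreal (indicator {0<..<1} v * (v powr (a - 1) * (1 - v) powr (- 1/2))) * ch (sqrt (1 + sqrt v)))"
    proof (cases "0 < v \<and> v < 1")
      case True
      then have v: "0 < v" "v < 1" by auto
      show ?thesis
        using v beta_kernel_half_one_minus_sqrt_one_minus[OF v, of a] sqrt_add_sqrt_one_minus(2)[OF v]
        by (simp add: ennreal_mult[symmetric] mult_ac)
    qed (auto simp: indicator_def)
  qed
  also have "\<dots> = ennreal (4 powr (- a)) * (\<integral>\<^sup>+v. ennreal (indicator {0<..<1} v * (v powr (a - 1) * (1 - v) powr (- 1/2))) * ch (sqrt (1 + sqrt v)) \<partial>lborel)"
    by (rule nn_integral_cmult) measurable
  finally show ?thesis
    unfolding F_def[symmetric] F_halves by (simp add: ennreal_mult mult.assoc)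
qed

lemma nn_integral_beta_density_sqrt_sum:
  fixes ch :: "real \<Rightarrow> ennreal"
  assumes a: "a > 0" and [measurable]: "ch \<in> borel_measurable borel"
  shows "(\<integral>\<^sup>+t. ennreal (beta_density a a t) * ch (sqrt t + sqrt (1 - t)) \<partial>lborel)
       = (\<integral>\<^sup>+v. ennreal (beta_density a (1/2) v) * ch (sqrt (1 + sqrt v)) \<partial>lborel)"
proof -
  define C where "C = Gamma (2 * a) / (Gamma a * Gamma a)"
  define C' where "C' = Gamma (a + 1/2) / (Gamma a * Gamma (1/2))"
  have C: "C > 0" "C' > 0"
    unfolding C_def C'_def using a by (auto intro!: divide_pos_pos)
  have "C * (2 * 4 powr (- a)) = C'"
  proof -
    have "(4::real) powr (- a) = 2 powr (- 2 * a)"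
      using powr_powr[of 2 2 "- a"] by simp
    then have "2 * 4 powr (- a) = 2 powr (1 - 2 * a)"
      by (simp add: powr_diff powr_minus_divide powr_add)
    then have "C * (2 * 4 powr (- a)) = 2 powr (1 - 2 * a) * Gamma (2 * a) / (Gamma a * Gamma a)"
      unfolding C_def by simp
    also have "\<dots> = Gamma a * Gamma (a + 1/2) / sqrt pi / (Gamma a * Gamma a)"
      using Gamma_legendre_duplication_real[OF a] by (simp add: field_simps)
    also have "\<dots> = C'"
      unfolding C'_def Gamma_one_half_real using a by (simp add: field_simps Gamma_real_pos)
    finally show ?thesis .
  qed
  have "(\<integral>\<^sup>+t. ennreal (beta_density a a t) * ch (sqrt t + sqrt (1 - t)) \<partial>lborel)
      = (\<integral>\<^sup>+t. ennreal C * (ennreal (indicator {0<..<1} t * (t powr (a - 1) * (1 - t) powr (a - 1))) * ch (sqrt t + sqrt (1 - t))) \<partial>lborel)"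
    using C by (intro nn_integral_cong) (auto simp: beta_density_def C_def indicator_def ennreal_mult[symmetric] mult_ac)
  also have "\<dots> = ennreal C * (ennreal (2 * 4 powr (- a)) * (\<integral>\<^sup>+v. ennreal (indicator {0<..<1} v * (v powr (a - 1) * (1 - v) powr (- 1/2))) * ch (sqrt (1 + sqrt v)) \<partial>lborel))"
    using a by (simp add: nn_integral_cmult nn_integral_beta_kernel_sqrt_sum)
  also have "\<dots> = (\<integral>\<^sup>+v. ennreal C' * (ennreal (indicator {0<..<1} v * (v powr (a - 1) * (1 - v) powr (- 1/2))) * ch (sqrt (1 + sqrt v))) \<partial>lborel)"
    using C \<open>C * (2 * 4 powr (- a)) = C'\<close>[symmetric]
    by (simp add: nn_integral_cmult ennreal_mult mult.assoc)
  also have "\<dots> = (\<integral>\<^sup>+v. ennreal (beta_density a (1/2) v) * ch (sqrt (1 + sqrt v)) \<partial>lborel)"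
    using C by (intro nn_integral_cong) (auto simp: beta_density_def C'_def indicator_def ennreal_mult[symmetric] mult_ac)
  finally show ?thesis .
qed

lemma nn_integral_gamma_density_sqrt_sum:
  assumes a: "a > 0" and [measurable]: "\<Psi> \<in> borel_measurable borel"
  shows "(\<integral>\<^sup>+x. ennreal (gamma_density a x) * (\<integral>\<^sup>+y. ennreal (gamma_density a y) * \<Psi> (sqrt x + sqrt y) \<partial>lborel) \<partial>lborel)
       = (\<integral>\<^sup>+g. ennreal (gamma_density (2 * a) g) * (\<integral>\<^sup>+v. ennreal (beta_density a (1/2) v) * \<Psi> (sqrt g * sqrt (1 + sqrt v)) \<partial>lborel) \<partial>lborel)"
proof -
  have "(\<integral>\<^sup>+x. ennreal (gamma_density a x) * (\<integral>\<^sup>+y. ennreal (gamma_density a y) * \<Psi> (sqrt x + sqrt y) \<partial>lborel) \<partial>lborel)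
      = (\<integral>\<^sup>+g. ennreal (gamma_density (a + a) g) * (\<integral>\<^sup>+t. ennreal (beta_density a a t) * \<Psi> (sqrt (g * t) + sqrt (g - g * t)) \<partial>lborel) \<partial>lborel)"
    by (rule nn_integral_gamma_density_pair[OF a a]) measurable
  also have "\<dots> = (\<integral>\<^sup>+g. ennreal (gamma_density (2 * a) g) * (\<integral>\<^sup>+v. ennreal (beta_density a (1/2) v) * \<Psi> (sqrt g * sqrt (1 + sqrt v)) \<partial>lborel) \<partial>lborel)"
  proof (rule nn_integral_cong)
    fix g :: real
    have "sqrt (g * t) + sqrt (g - g * t) = sqrt g * (sqrt t + sqrt (1 - t))" for t
    proof -
      have "g - g * t = g * (1 - t)"
        by (simp add: algebra_simps)
      then show ?thesis
        by (simp only: real_sqrt_mult distrib_left)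
    qed
    moreover have "(\<integral>\<^sup>+t. ennreal (beta_density a a t) * \<Psi> (sqrt g * (sqrt t + sqrt (1 - t))) \<partial>lborel)
        = (\<integral>\<^sup>+v. ennreal (beta_density a (1/2) v) * \<Psi> (sqrt g * sqrt (1 + sqrt v)) \<partial>lborel)"
      by (rule nn_integral_beta_density_sqrt_sum[OF a, of "\<lambda>r. \<Psi> (sqrt g * r)"]) measurable
    ultimately show "ennreal (gamma_density (a + a) g) * (\<integral>\<^sup>+t. ennreal (beta_density a a t) * \<Psi> (sqrt (g * t) + sqrt (g - g * t)) \<partial>lborel)
        = ennreal (gamma_density (2 * a) g) * (\<integral>\<^sup>+v. ennreal (beta_density a (1/2) v) * \<Psi> (sqrt g * sqrt (1 + sqrt v)) \<partial>lborel)"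
      by (simp only: mult_2)
  qed
  finally show ?thesis .
qed

lemma nn_integral_beta_prime_density_half_sum:
  assumes p: "p > 0" and q: "q > 0" and [measurable]: "\<phi> \<in> borel_measurable borel"
  shows "(\<integral>\<^sup>+x. ennreal (beta_prime_density p (1/2) x) * (\<integral>\<^sup>+y. ennreal (beta_prime_density q (1/2) y) * \<phi> (x + y) \<partial>lborel) \<partial>lborel)
       = (\<integral>\<^sup>+g. ennreal (gamma_density p g) * (\<integral>\<^sup>+h. ennreal (gamma_density q h) *
            (\<integral>\<^sup>+s. ennreal (levy_density (sqrt g + sqrt h) s) * \<phi> s \<partial>lborel) \<partial>lborel) \<partial>lborel)"
proof -
  have "(\<integral>\<^sup>+x. ennreal (beta_prime_density p (1/2) x) * (\<integral>\<^sup>+y. ennreal (beta_prime_density q (1/2) y) * \<phi> (x + y) \<partial>lborel) \<partial>lborel)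
      = (\<integral>\<^sup>+g. ennreal (gamma_density p g) * (\<integral>\<^sup>+x. ennreal (levy_density (sqrt g) x) *
            (\<integral>\<^sup>+y. ennreal (beta_prime_density q (1/2) y) * \<phi> (x + y) \<partial>lborel) \<partial>lborel) \<partial>lborel)"
    by (rule nn_integral_beta_prime_density_half[OF p]) measurable
  also have "\<dots> = (\<integral>\<^sup>+g. ennreal (gamma_density p g) * (\<integral>\<^sup>+h. ennreal (gamma_density q h) *
            (\<integral>\<^sup>+s. ennreal (levy_density (sqrt g + sqrt h) s) * \<phi> s \<partial>lborel) \<partial>lborel) \<partial>lborel)"
  proof (rule nn_integral_gamma_density_cong)
    fix g :: real
    assume "g > 0"
    have "(\<integral>\<^sup>+x. ennreal (levy_density (sqrt g) x) * (\<integral>\<^sup>+y. ennreal (beta_prime_density q (1/2) y) * \<phi> (x + y) \<partial>lborel) \<partial>lborel)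
        = (\<integral>\<^sup>+y. ennreal (beta_prime_density q (1/2) y) * (\<integral>\<^sup>+x. ennreal (levy_density (sqrt g) x) * \<phi> (x + y) \<partial>lborel) \<partial>lborel)"
      by (rule nn_integral_mult_nn_integral_swap) measurable
    also have "\<dots> = (\<integral>\<^sup>+h. ennreal (gamma_density q h) * (\<integral>\<^sup>+y. ennreal (levy_density (sqrt h) y) *
            (\<integral>\<^sup>+x. ennreal (levy_density (sqrt g) x) * \<phi> (x + y) \<partial>lborel) \<partial>lborel) \<partial>lborel)"
      by (rule nn_integral_beta_prime_density_half[OF q]) measurable
    also have "\<dots> = (\<integral>\<^sup>+h. ennreal (gamma_density q h) * (\<integral>\<^sup>+s. ennreal (levy_density (sqrt g + sqrt h) s) * \<phi> s \<partial>lborel) \<partial>lborel)"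
      using \<open>g > 0\<close> by (intro nn_integral_gamma_density_cong nn_integral_levy_density_sum) auto
    finally show "(\<integral>\<^sup>+x. ennreal (levy_density (sqrt g) x) * (\<integral>\<^sup>+y. ennreal (beta_prime_density q (1/2) y) * \<phi> (x + y) \<partial>lborel) \<partial>lborel)
        = (\<integral>\<^sup>+h. ennreal (gamma_density q h) * (\<integral>\<^sup>+s. ennreal (levy_density (sqrt g + sqrt h) s) * \<phi> s \<partial>lborel) \<partial>lborel)" .
  qed
  finally show ?thesis .
qed

lemma nn_integral_beta_prime_density_half_scaled:
  assumes p: "p > 0" and k: "k > 0" and [measurable]: "\<phi> \<in> borel_measurable borel"
  shows "(\<integral>\<^sup>+u. ennreal (beta_prime_density p (1/2) u) * \<phi> (u * k) \<partial>lborel)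
       = (\<integral>\<^sup>+g. ennreal (gamma_density p g) * (\<integral>\<^sup>+s. ennreal (levy_density (sqrt g * sqrt k) s) * \<phi> s \<partial>lborel) \<partial>lborel)"
proof -
  have "(\<integral>\<^sup>+u. ennreal (beta_prime_density p (1/2) u) * \<phi> (u * k) \<partial>lborel)
      = (\<integral>\<^sup>+g. ennreal (gamma_density p g) * (\<integral>\<^sup>+u. ennreal (levy_density (sqrt g) u) * \<phi> (k * u) \<partial>lborel) \<partial>lborel)"
    by (simp add: mult.commute[of _ k] nn_integral_beta_prime_density_half[OF p])
  also have "\<dots> = (\<integral>\<^sup>+g. ennreal (gamma_density p g) * (\<integral>\<^sup>+s. ennreal (levy_density (sqrt g * sqrt k) s) * \<phi> s \<partial>lborel) \<partial>lborel)"
    using k by (intro nn_integral_gamma_density_cong) (simp add: nn_integral_levy_density_scale)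
  finally show ?thesis .
qed

lemma nn_integral_beta_prime_sum_eq_product:
  assumes a: "a > 0" and [measurable]: "\<phi> \<in> borel_measurable borel"
  shows "(\<integral>\<^sup>+x. ennreal (beta_prime_density a (1/2) x) * (\<integral>\<^sup>+y. ennreal (beta_prime_density a (1/2) y) * \<phi> (x + y) \<partial>lborel) \<partial>lborel)
       = (\<integral>\<^sup>+u. ennreal (beta_prime_density (2 * a) (1/2) u) * (\<integral>\<^sup>+v. ennreal (beta_density a (1/2) v) * \<phi> (u * (1 + sqrt v)) \<partial>lborel) \<partial>lborel)"
proof -
  define \<Psi> where "\<Psi> c = (\<integral>\<^sup>+s. ennreal (levy_density c s) * \<phi> s \<partial>lborel)" for c
  have [measurable]: "\<Psi> \<in> borel_measurable borel"
    unfolding \<Psi>_def by measurable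
  have "(\<integral>\<^sup>+x. ennreal (beta_prime_density a (1/2) x) * (\<integral>\<^sup>+y. ennreal (beta_prime_density a (1/2) y) * \<phi> (x + y) \<partial>lborel) \<partial>lborel)
      = (\<integral>\<^sup>+g. ennreal (gamma_density a g) * (\<integral>\<^sup>+h. ennreal (gamma_density a h) * \<Psi> (sqrt g + sqrt h) \<partial>lborel) \<partial>lborel)"
    unfolding \<Psi>_def by (rule nn_integral_beta_prime_density_half_sum[OF a a]) measurable
  also have "\<dots> = (\<integral>\<^sup>+g. ennreal (gamma_density (2 * a) g) * (\<integral>\<^sup>+v. ennreal (beta_density a (1/2) v) * \<Psi> (sqrt g * sqrt (1 + sqrt v)) \<partial>lborel) \<partial>lborel)"
    by (rule nn_integral_gamma_density_sqrt_sum[OF a]) measurable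
  also have "\<dots> = (\<integral>\<^sup>+v. ennreal (beta_density a (1/2) v) * (\<integral>\<^sup>+g. ennreal (gamma_density (2 * a) g) * \<Psi> (sqrt g * sqrt (1 + sqrt v)) \<partial>lborel) \<partial>lborel)"
    by (rule nn_integral_mult_nn_integral_swap) measurable
  also have "\<dots> = (\<integral>\<^sup>+v. ennreal (beta_density a (1/2) v) * (\<integral>\<^sup>+u. ennreal (beta_prime_density (2 * a) (1/2) u) * \<phi> (u * (1 + sqrt v)) \<partial>lborel) \<partial>lborel)"
  proof (rule nn_integral_cong)
    fix v :: real
    have "0 < v \<Longrightarrow> 0 < 1 + sqrt v"
      by (simp add: add_pos_nonneg)
    then show "ennreal (beta_density a (1/2) v) * (\<integral>\<^sup>+g. ennreal (gamma_density (2 * a) g) * \<Psi> (sqrt g * sqrt (1 + sqrt v)) \<partial>lborel)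
        = ennreal (beta_density a (1/2) v) * (\<integral>\<^sup>+u. ennreal (beta_prime_density (2 * a) (1/2) u) * \<phi> (u * (1 + sqrt v)) \<partial>lborel)"
      unfolding \<Psi>_def using a
      by (cases "0 < v \<and> v < 1") (simp_all add: nn_integral_beta_prime_density_half_scaled beta_density_def)
  qed
  also have "\<dots> = (\<integral>\<^sup>+u. ennreal (beta_prime_density (2 * a) (1/2) u) * (\<integral>\<^sup>+v. ennreal (beta_density a (1/2) v) * \<phi> (u * (1 + sqrt v)) \<partial>lborel) \<partial>lborel)"
    by (rule nn_integral_mult_nn_integral_swap[symmetric]) measurable
  finally show ?thesis .
qed

theorem theoremA:
  fixes a :: real
  assumes "a > 0"
  shows "distr (beta_prime_measure a (1/2) \<Otimes>\<^sub>M beta_prime_measure a (1/2)) borel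
            (\<lambda>(x, y). x + y)
       = distr (beta_prime_measure (2 * a) (1/2) \<Otimes>\<^sub>M beta_measure a (1/2)) borel
            (\<lambda>(x, y). x * (1 + sqrt y))"
proof (rule measure_eqI)
  fix A
  assume "A \<in> sets (distr (beta_prime_measure a (1/2) \<Otimes>\<^sub>M beta_prime_measure a (1/2)) borel (\<lambda>(x, y). x + y))"
  then have [measurable]: "A \<in> sets borel"
    by simp
  show "emeasure (distr (beta_prime_measure a (1/2) \<Otimes>\<^sub>M beta_prime_measure a (1/2)) borel (\<lambda>(x, y). x + y)) A
      = emeasure (distr (beta_prime_measure (2 * a) (1/2) \<Otimes>\<^sub>M beta_measure a (1/2)) borel (\<lambda>(x, y). x * (1 + sqrt y))) A"
    unfolding beta_prime_measure_def beta_measure_def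
    using nn_integral_beta_prime_sum_eq_product[OF assms, of "indicator A"]
    by (simp add: emeasure_distr_pair_density)
qed simp

end
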